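(* In the setting described in the context, choose an initial point $x_0$, target accuracy $0<\epsilon<\min\{f(x_0)-f^*,2\mathcal{R}_{LP^{-1}}^2(x_0)\}$, confidence $0<\rho<1$, and $k$ satisfying either $$k\geq\frac{2\mathcal{R}^2_{LP^{-1}}(x_0)}{\epsilon}\left(1+\log\frac1\rho\right)+2-\frac{2\mathcal{R}^2_{LP^{-1}}(x_0)}{f(x_0)-f^*}$$ or $$k\geq\frac{2\mathcal{R}^2_{LP^{-1}}(x_0)}{\epsilon}\left(1+\log\frac1\rho\right)-2.$$ If $x_k$ is the random point generated by RCDS$(p,x_0)$ applied to the convex function $f$, then $\mathbf{P}(f(x_k)-f^*\leq\epsilon)\geq1-\rho$.
   Context: Let $U\in\mathbf{R}^{N\times N}$ be a column permutation of the $N\times N$ identity matrix, partitioned as $U=[U_1,\dots,U_n]$ with $U_i\in\mathbf{R}^{N\times N_i}$, $\sum_iN_i=N$; for $x\in\mathbf{R}^N$ write $x^{(i)}=U_i^Tx$, so $x=\sum_iU_ix^{(i)}$. Each $\mathbf{R}^{N_i}$ carries an arbitrary norm $\|\cdot\|_{(i)}$ with dual norm $\|s\|_{(i)}^*=\max_{\|t\|_{(i)}=1}\langle s,t\rangle$. Let $f:\mathbf{R}^N\to\mathbf{R}$ be convex and differentiable with $\|\nabla_if(x+U_it)-\nabla_if(x)\|_{(i)}^*\leq L_i\|t\|_{(i)}$ for all $x\in\mathbf{R}^N$, $t\in\mathbf{R}^{N_i}$, $i$, where $L_i>0$ and $\nabla_if(x)=U_i^T\nabla f(x)$; assume $f$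 attains its minimum $f^*$, with set of minimizers $X^*$. Let $p=(p_1,\dots,p_n)$ be a probability vector with all $p_i>0$, $L=\mathrm{Diag}(L_1,\dots,L_n)$, $P=\mathrm{Diag}(p_1,\dots,p_n)$, and for $W=\mathrm{Diag}(w_1,\dots,w_n)$ with $w_i>0$ let $\|x\|_W=(\sum_iw_i\|x^{(i)}\|_{(i)}^2)^{1/2}$; in particular $\|x\|_{LP^{-1}}=(\sum_i\frac{L_i}{p_i}\|x^{(i)}\|_{(i)}^2)^{1/2}$. Let $\mathcal{R}_W(x)=\max_y\max_{x^*\in X^*}\{\|y-x^*\|_W: f(y)\leq f(x)\}$, and $\mathcal{R}^2_W$ its square. For $s\in\mathbf{R}^{N_i}$, $s^\#$ denotes an optimal solution of $\min_{t\in\mathbf{R}^{N_i}}\{-\langle s,t\rangle+\frac12\|t\|_{(i)}^2\}$. Algorithm RCDS$(p,x_0)$: for $k=0,1,2,\dots$, choose $i\in\{1,\dots,n\}$ with probability $p_i$ (independently), and set $x_{k+1}=x_k-\frac1{L_i}U_i(\nabla_if(x_k))^\#$. *)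

theory Defs
  imports "HOL-Analysis.Analysis" "HOL-Probability.Probability_Mass_Function"
begin

text \<open>The permutation U = [U_1,...,U_n] of the identity is encoded by
  a map blk assigning to every coordinate j of R^N its block index blk j (blocks are
  indexed 0..n-1). The block space R^{N_i} is identified (via U_i) with the subspace
  block_space blk i of vectors supported on block i; x^(i) corresponds to
  block_proj blk i x = U_i U_i^T x, and U_i^T U_i-inner products coincide with
  the inner product of R^N on these subspaces.\<close>

definition block_space :: "('N::finite \<Rightarrow> nat) \<Rightarrow> nat \<Rightarrow> (real^'N) set" where
  "block_space blk i = {t. \<forall>j. blk j \<noteq> i \<longrightarrow> t $ j = 0}"

definition block_proj :: "('N::finite \<Rightarrow> nat) \<Rightarrow> nat \<Rightarrow> real^'N \<Rightarrow> real^'N" where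
  "block_proj blk i x = (\<chi> j. if blk j = i then x $ j else 0)"

definition is_norm_on :: "(real^'N::finite) set \<Rightarrow> (real^'N \<Rightarrow> real) \<Rightarrow> bool" where
  "is_norm_on B nrm \<longleftrightarrow>
     (\<forall>t\<in>B. 0 \<le> nrm t) \<and>
     (\<forall>t\<in>B. nrm t = 0 \<longleftrightarrow> t = 0) \<and>
     (\<forall>t\<in>B. \<forall>c. nrm (c *\<^sub>R t) = \<bar>c\<bar> * nrm t) \<and>
     (\<forall>t\<in>B. \<forall>u\<in>B. nrm (t + u) \<le> nrm t + nrm u)"

definition dual_norm :: "(real^'N::finite) set \<Rightarrow> (real^'N \<Rightarrow> real) \<Rightarrow> real^'N \<Rightarrow> real" where
  "dual_norm B nrm s = Sup {s \<bullet> t | t. t \<in> B \<and> nrm t = 1}"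

definition wnorm :: "nat \<Rightarrow> ('N::finite \<Rightarrow> nat) \<Rightarrow> (nat \<Rightarrow> real^'N \<Rightarrow> real) \<Rightarrow> (nat \<Rightarrow> real)
    \<Rightarrow> real^'N \<Rightarrow> real" where
  "wnorm n blk nrm w x = sqrt (\<Sum>i<n. w i * (nrm i (block_proj blk i x))\<^sup>2)"

definition level_radius :: "nat \<Rightarrow> ('N::finite \<Rightarrow> nat) \<Rightarrow> (nat \<Rightarrow> real^'N \<Rightarrow> real) \<Rightarrow> (nat \<Rightarrow> real)
    \<Rightarrow> (real^'N \<Rightarrow> real) \<Rightarrow> real^'N \<Rightarrow> real" where
  "level_radius n blk nrm w f x =
     Sup {wnorm n blk nrm w (y - xs) | y xs. f y \<le> f x \<and> (\<forall>z. f xs \<le> f z)}"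

definition rcds_step :: "('N::finite \<Rightarrow> nat) \<Rightarrow> (nat \<Rightarrow> real) \<Rightarrow> (nat \<Rightarrow> real^'N \<Rightarrow> real^'N)
    \<Rightarrow> (real^'N \<Rightarrow> real^'N) \<Rightarrow> nat \<Rightarrow> real^'N \<Rightarrow> real^'N" where
  "rcds_step blk L sharp grad i x = x - (1 / L i) *\<^sub>R sharp i (block_proj blk i (grad x))"

text \<open>Distribution of x_k generated by RCDS(p, x_0): the block index is drawn
  independently at each iteration from the distribution I (p_i = pmf I i).\<close>
fun rcds :: "('N::finite \<Rightarrow> nat) \<Rightarrow> (nat \<Rightarrow> real) \<Rightarrow> (nat \<Rightarrow> real^'N \<Rightarrow> real^'N)
    \<Rightarrow> (real^'N \<Rightarrow> real^'N) \<Rightarrow> nat pmf \<Rightarrow> real^'N \<Rightarrow> nat \<Rightarrow> (real^'N) pmf" where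
  "rcds blk L sharp grad I x0 0 = return_pmf x0"
| "rcds blk L sharp grad I x0 (Suc k) =
     bind_pmf (rcds blk L sharp grad I x0 k)
       (\<lambda>x. map_pmf (\<lambda>i. rcds_step blk L sharp grad i x) I)"

end

theory Submission
  imports Defs
begin

text \<open>One step of RCDS on block \<open>i\<close> decreases \<open>f\<close> by at least \<open>(\<parallel>\<nabla>\<^sub>if(x)\<parallel>\<^sup>*\<^sub>(\<^sub>i\<^sub>))\<^sup>2 / (2 L\<^sub>i)\<close>,
  by the block descent lemma and the optimality of \<open>s\<^sup>#\<close>. Averaging over \<open>i\<close> and bounding the
  gap \<open>f(x) - f\<^sup>*\<close> by \<open>\<R> \<parallel>\<nabla>f(x)\<parallel>\<^sup>*\<close> (convexity and Cauchy--Schwarz for the weighted norms)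
  gives \<open>E[\<xi>\<^sub>k\<^sub>+\<^sub>1 | x\<^sub>k] \<le> \<xi>\<^sub>k - \<xi>\<^sub>k\<^sup>2 / c\<close> with \<open>c = 2\<R>\<^sup>2\<close>. For the gap truncated to zero below \<open>\<epsilon>\<close>
  the expectation \<open>\<theta>\<^sub>k\<close> then obeys both \<open>\<theta>\<^sub>k\<^sub>+\<^sub>1 \<le> \<theta>\<^sub>k - \<theta>\<^sub>k\<^sup>2/c\<close> (by Jensen) and
  \<open>\<theta>\<^sub>k\<^sub>+\<^sub>1 \<le> (1 - \<epsilon>/c) \<theta>\<^sub>k\<close>: the first drives \<open>\<theta>\<close> below \<open>\<epsilon>\<close>, the second then shrinks it by the
  factor \<open>\<rho>\<close>, and Markov's inequality applied to \<open>\<theta>\<^sub>k \<le> \<epsilon>\<rho>\<close> yields the probability bound.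
  The second admissible bound on \<open>k\<close> implies the first since \<open>f(x0) - f\<^sup>* \<le> \<R>\<^sup>2/2\<close>.\<close>

section \<open>Block decomposition and norms on blocks\<close>

lemma block_proj_in_block_space: "block_proj blk i x \<in> block_space blk i"
  by (simp add: block_proj_def block_space_def)

lemma subspace_block_space: "subspace (block_space blk i)"
  unfolding subspace_def block_space_def by auto

lemma axis_in_block_space: "blk j = i \<Longrightarrow> axis j 1 \<in> block_space blk i"
  by (auto simp: block_space_def axis_def)

lemma inner_block_proj_left:
  assumes "t \<in> block_space blk i"
  shows "block_proj blk i g \<bullet> t = g \<bullet> t"
proof -
  have "\<And>j. (if blk j = i then g $ j else 0) * t $ j = g $ j * t $ j"
    using assms by (auto simp: block_space_def)
  then show ?thesis unfolding inner_vec_def block_proj_def by (intro sum.cong) auto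
qed

lemma sum_block_proj:
  assumes "\<forall>j. blk j < n"
  shows "(\<Sum>i<n. block_proj blk i x) = x"
proof (rule vec_eq_iff[THEN iffD2], rule allI)
  fix j
  have "(\<Sum>i<n. block_proj blk i x) $ j = (\<Sum>i<n. if blk j = i then x $ j else 0)"
    by (simp add: block_proj_def sum_component)
  also have "\<dots> = x $ j" using assms by (simp add: sum.delta')
  finally show "(\<Sum>i<n. block_proj blk i x) $ j = x $ j" .
qed

lemma inner_eq_sum_block_proj:
  assumes "\<forall>j. blk j < n"
  shows "g \<bullet> h = (\<Sum>i<n. block_proj blk i g \<bullet> block_proj blk i h)"
proof -
  have "g \<bullet> h = (\<Sum>i<n. g \<bullet> block_proj blk i h)"
    using sum_block_proj[OF assms, of h] by (metis inner_sum_right)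
  also have "\<dots> = (\<Sum>i<n. block_proj blk i g \<bullet> block_proj blk i h)"
    by (intro sum.cong refl) (metis inner_block_proj_left block_proj_in_block_space inner_commute)
  finally show ?thesis .
qed

lemma is_norm_on_nonneg: "is_norm_on B nrm \<Longrightarrow> t \<in> B \<Longrightarrow> 0 \<le> nrm t"
  unfolding is_norm_on_def by blast

lemma is_norm_on_scaleR: "is_norm_on B nrm \<Longrightarrow> t \<in> B \<Longrightarrow> nrm (c *\<^sub>R t) = \<bar>c\<bar> * nrm t"
  unfolding is_norm_on_def by blast

lemma is_norm_on_triangle:
  "is_norm_on B nrm \<Longrightarrow> t \<in> B \<Longrightarrow> u \<in> B \<Longrightarrow> nrm (t + u) \<le> nrm t + nrm u"
  unfolding is_norm_on_def by blast

lemma is_norm_on_zero: "is_norm_on B nrm \<Longrightarrow> subspace B \<Longrightarrow> nrm 0 = 0"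
  unfolding is_norm_on_def using subspace_0 by blast

lemma is_norm_on_pos: "is_norm_on B nrm \<Longrightarrow> t \<in> B \<Longrightarrow> t \<noteq> 0 \<Longrightarrow> 0 < nrm t"
  unfolding is_norm_on_def by force

lemma is_norm_on_sum_le:
  assumes "is_norm_on B nrm" "subspace B" "finite F" "\<forall>j\<in>F. v j \<in> B"
  shows "nrm (sum v F) \<le> (\<Sum>j\<in>F. nrm (v j))"
  using assms(3,4)
proof (induction F rule: finite_induct)
  case empty then show ?case using is_norm_on_zero[OF assms(1,2)] by simp
next
  case (insert x F)
  have "sum v F \<in> B" using insert assms(2) by (intro subspace_sum) auto
  then show ?case using is_norm_on_triangle[OF assms(1), of "v x" "sum v F"] insert by simp
qed

lemma is_norm_on_lipschitz:
  assumes "is_norm_on B nrm" "subspace B" and C: "\<forall>t\<in>B. nrm t \<le> C * norm t"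
    and "x \<in> B" "y \<in> B"
  shows "\<bar>nrm x - nrm y\<bar> \<le> C * dist x y"
proof -
  have "x - y \<in> B" "y - x \<in> B" using assms(2,4,5) by (auto intro: subspace_diff)
  then have "nrm x \<le> nrm y + C * dist x y" "nrm y \<le> nrm x + C * dist x y"
    using is_norm_on_triangle[OF assms(1), of y "x - y"] is_norm_on_triangle[OF assms(1), of x "y - x"]
      C assms(4,5) by (force simp: dist_norm norm_minus_commute)+
  then show ?thesis by linarith
qed

lemma is_norm_on_block_space_le_norm:
  assumes "is_norm_on (block_space blk i) nrm"
  shows "\<exists>C\<ge>0. \<forall>t\<in>block_space blk i. nrm t \<le> C * norm t"
proof -
  let ?B = "block_space blk i"
  define c where "c j = (if blk j = i then nrm (axis j (1::real)) else 0)" for j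
  have c_nonneg: "c j \<ge> 0" for j
    using is_norm_on_nonneg[OF assms axis_in_block_space] by (simp add: c_def)
  have "nrm t \<le> (\<Sum>j\<in>UNIV. c j) * norm t" if t: "t \<in> ?B" for t
  proof -
    have mem: "\<forall>j\<in>UNIV. (t $ j) *\<^sub>R axis j (1::real) \<in> ?B"
      using t by (auto simp: block_space_def axis_def)
    have "t = (\<Sum>j\<in>UNIV. (t $ j) *\<^sub>R axis j (1::real))"
      using basis_expansion[of t] by (simp add: scalar_mult_eq_scaleR)
    then have "nrm t \<le> (\<Sum>j\<in>UNIV. nrm ((t $ j) *\<^sub>R axis j (1::real)))"
      using is_norm_on_sum_le[OF assms subspace_block_space _ mem] by simp
    also have "\<dots> \<le> (\<Sum>j\<in>UNIV. c j * norm t)"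
    proof (rule sum_mono)
      fix j
      show "nrm ((t $ j) *\<^sub>R axis j (1::real)) \<le> c j * norm t"
      proof (cases "blk j = i")
        case True
        then have "nrm ((t $ j) *\<^sub>R axis j (1::real)) = \<bar>t $ j\<bar> * c j"
          using is_norm_on_scaleR[OF assms axis_in_block_space] by (simp add: c_def)
        also have "\<dots> \<le> norm t * c j"
          using c_nonneg[of j] component_le_norm_cart[of t j] by (intro mult_right_mono) auto
        finally show ?thesis by (simp add: mult.commute)
      next
        case False
        then have "t $ j = 0" using t by (auto simp: block_space_def)
        then show ?thesis
          using is_norm_on_zero[OF assms subspace_block_space] c_nonneg[of j] by simp
      qed
    qed
    also have "\<dots> = (\<Sum>j\<in>UNIV. c j) * norm t" by (simp add: sum_distrib_right)
    finally show ?thesis .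
  qed
  moreover have "(\<Sum>j\<in>UNIV. c j) \<ge> 0" using c_nonneg by (simp add: sum_nonneg)
  ultimately show ?thesis by blast
qed

text \<open>A norm is continuous and positive on the compact unit sphere of the subspace.\<close>

lemma is_norm_on_ge_norm:
  fixes B :: "(real^'N::finite) set"
  assumes nrm: "is_norm_on B nrm" and B: "subspace B" and C: "\<forall>t\<in>B. nrm t \<le> C * norm t"
  shows "\<exists>m>0. \<forall>t\<in>B. m * norm t \<le> nrm t"
proof -
  let ?S = "B \<inter> sphere 0 1"
  have "\<exists>m>0. \<forall>u\<in>?S. m \<le> nrm u"
  proof (cases "?S = {}")
    case False
    then obtain u where u: "u \<in> ?S" by blast
    have "u \<noteq> 0" using u by auto
    then have "0 < nrm u" using u is_norm_on_pos[OF nrm, of u] by blast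
    then have C_pos: "0 < C" using C u by force
    have cont: "continuous_on ?S nrm"
      unfolding continuous_on_iff
    proof (intro ballI allI impI)
      fix x e assume x: "x \<in> ?S" and e: "(0::real) < e"
      show "\<exists>d>0. \<forall>x'\<in>?S. dist x' x < d \<longrightarrow> dist (nrm x') (nrm x) < e"
      proof (intro exI[of _ "e / C"] conjI ballI impI)
        show "0 < e / C" using e C_pos by simp
        fix x' assume x': "x' \<in> ?S" and d: "dist x' x < e / C"
        have "dist (nrm x') (nrm x) \<le> C * dist x' x"
          using is_norm_on_lipschitz[OF nrm B C, of x' x] x x' by (simp add: dist_real_def)
        also have "\<dots> < e" using d C_pos by (simp add: field_simps)
        finally show "dist (nrm x') (nrm x) < e" .
      qed
    qed
    have "compact ?S" by (intro closed_Int_compact closed_subspace B compact_sphere)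
    then obtain t0 where t0: "t0 \<in> ?S" "\<forall>u\<in>?S. nrm t0 \<le> nrm u"
      using continuous_attains_inf[OF _ False cont] by blast
    have "t0 \<noteq> 0" using t0(1) by auto
    then have "0 < nrm t0" using t0(1) is_norm_on_pos[OF nrm, of t0] by blast
    then show ?thesis using t0 by blast
  qed (auto intro: exI[of _ 1])
  then obtain m where m: "m > 0" "\<forall>u\<in>?S. m \<le> nrm u" by blast
  have "m * norm t \<le> nrm t" if t: "t \<in> B" for t
  proof (cases "t = 0")
    case True then show ?thesis using is_norm_on_zero[OF nrm B] by simp
  next
    case False
    have "(1 / norm t) *\<^sub>R t \<in> ?S" using t False B by (auto intro: subspace_scale)
    then have "m \<le> nrm ((1 / norm t) *\<^sub>R t)" using m(2) by blast
    then have "m \<le> (1 / norm t) * nrm t" using is_norm_on_scaleR[OF nrm t, of "1 / norm t"] by simp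
    then show ?thesis using False by (simp add: field_simps)
  qed
  then show ?thesis using m(1) by blast
qed

lemma block_space_unit_exists:
  assumes "is_norm_on (block_space blk i) nrm" "blk j = i"
  shows "\<exists>t\<in>block_space blk i. nrm t = 1"
proof -
  let ?a = "axis j (1::real)"
  have a: "?a \<in> block_space blk i" using assms(2) by (rule axis_in_block_space)
  then have pos: "nrm ?a > 0" using is_norm_on_pos[OF assms(1)] by (simp add: axis_eq_0_iff)
  have "(1 / nrm ?a) *\<^sub>R ?a \<in> block_space blk i"
    using a subspace_block_space by (auto intro: subspace_scale)
  moreover have "nrm ((1 / nrm ?a) *\<^sub>R ?a) = 1" using is_norm_on_scaleR[OF assms(1) a] pos by simp
  ultimately show ?thesis by blast
qed

lemma bdd_above_dual_norm_set:
  assumes "is_norm_on (block_space blk i) nrm"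
  shows "bdd_above {s \<bullet> t | t. t \<in> block_space blk i \<and> nrm t = 1}"
proof -
  obtain C where "\<forall>t\<in>block_space blk i. nrm t \<le> C * norm t"
    using is_norm_on_block_space_le_norm[OF assms] by blast
  then obtain m where m: "m > 0" "\<forall>t\<in>block_space blk i. m * norm t \<le> nrm t"
    using is_norm_on_ge_norm[OF assms subspace_block_space] by blast
  have "s \<bullet> t \<le> norm s / m" if "t \<in> block_space blk i" "nrm t = 1" for t
  proof -
    have "norm t \<le> 1 / m" using m that by (force simp: field_simps)
    then have "norm s * norm t \<le> norm s * (1 / m)" by (intro mult_left_mono) auto
    then show ?thesis using norm_cauchy_schwarz[of s t] by simp
  qed
  then show ?thesis unfolding bdd_above_def by blast
qed

lemma inner_le_dual_norm:
  assumes "is_norm_on (block_space blk i) nrm" "t \<in> block_space blk i" "nrm t = 1"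
  shows "s \<bullet> t \<le> dual_norm (block_space blk i) nrm s"
  unfolding dual_norm_def using assms by (intro cSup_upper bdd_above_dual_norm_set) auto

lemma dual_norm_nonneg:
  assumes "is_norm_on (block_space blk i) nrm" "blk j = i"
  shows "0 \<le> dual_norm (block_space blk i) nrm s"
proof -
  obtain t where t: "t \<in> block_space blk i" "nrm t = 1"
    using block_space_unit_exists[OF assms] by blast
  have "- t \<in> block_space blk i" using t subspace_block_space by (auto intro: subspace_neg)
  moreover have "nrm (- t) = 1" using is_norm_on_scaleR[OF assms(1) t(1), of "- 1"] t(2) by simp
  ultimately have "s \<bullet> (- t) \<le> dual_norm (block_space blk i) nrm s"
    using inner_le_dual_norm[OF assms(1)] by blast
  moreover have "s \<bullet> t \<le> dual_norm (block_space blk i) nrm s"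
    using inner_le_dual_norm[OF assms(1) t] .
  ultimately show ?thesis by simp
qed

lemma inner_le_dual_norm_mult:
  assumes "is_norm_on (block_space blk i) nrm" "t \<in> block_space blk i"
  shows "s \<bullet> t \<le> dual_norm (block_space blk i) nrm s * nrm t"
proof (cases "t = 0")
  case True then show ?thesis using is_norm_on_zero[OF assms(1) subspace_block_space] by simp
next
  case False
  then have pos: "nrm t > 0" using is_norm_on_pos[OF assms] by simp
  let ?u = "(1 / nrm t) *\<^sub>R t"
  have "?u \<in> block_space blk i" using assms(2) subspace_block_space by (auto intro: subspace_scale)
  moreover have "nrm ?u = 1" using is_norm_on_scaleR[OF assms] pos by simp
  ultimately have "s \<bullet> ?u \<le> dual_norm (block_space blk i) nrm s"
    using inner_le_dual_norm[OF assms(1)] by blast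
  then show ?thesis using pos by (simp add: field_simps)
qed

section \<open>Smoothness, convexity and the \<open>#\<close>-map\<close>

lemma has_real_derivative_along_line:
  assumes "\<forall>x. (f has_derivative (\<lambda>h. grad x \<bullet> h)) (at x)"
  shows "((\<lambda>\<tau>. f (x + \<tau> *\<^sub>R t)) has_real_derivative (grad (x + \<tau> *\<^sub>R t) \<bullet> t)) (at \<tau>)"
proof -
  have "((\<lambda>\<tau>. x + \<tau> *\<^sub>R t) has_derivative (\<lambda>h. h *\<^sub>R t)) (at \<tau>)"
    by (auto intro!: derivative_eq_intros)
  from has_derivative_compose[OF this assms[rule_format, of "x + \<tau> *\<^sub>R t"]] show ?thesis
    by (rule has_derivative_imp_has_field_derivative) simp
qed

lemma convex_on_gradient_inequality:
  assumes convex: "convex_on UNIV f"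
    and grad: "\<forall>x. (f has_derivative (\<lambda>h. grad x \<bullet> h)) (at x)"
  shows "f x + grad x \<bullet> (y - x) \<le> f y"
proof -
  let ?h = "y - x"
  define g where "g \<tau> = f (x + \<tau> *\<^sub>R ?h)" for \<tau> :: real
  have "convex_on UNIV g"
  proof (rule convex_onI)
    fix t a b :: real assume t: "0 < t" "t < 1"
    have "(1 - t) *\<^sub>R (x + a *\<^sub>R ?h) + t *\<^sub>R (x + b *\<^sub>R ?h) = x + ((1 - t) *\<^sub>R a + t *\<^sub>R b) *\<^sub>R ?h"
      by (simp add: algebra_simps)
    then show "g ((1 - t) *\<^sub>R a + t *\<^sub>R b) \<le> (1 - t) * g a + t * g b"
      unfolding g_def using convex_onD[OF convex, of t "x + a *\<^sub>R ?h" "x + b *\<^sub>R ?h"] t by simp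
  qed simp
  moreover have "(g has_real_derivative (grad x \<bullet> ?h)) (at 0 within UNIV)"
    unfolding g_def using has_real_derivative_along_line[OF grad, of x ?h 0] by simp
  ultimately have "(grad x \<bullet> ?h) * (1 - 0) \<le> g 1 - g 0"
    by (intro convex_on_imp_above_tangent) auto
  then show ?thesis unfolding g_def by simp
qed

text \<open>The descent lemma, restricted to a block: the block Lipschitz condition bounds the
  derivative of \<open>\<tau> \<mapsto> f (x + \<tau> t)\<close> on \<open>[0, 1]\<close>.\<close>

lemma block_descent_lemma:
  assumes grad: "\<forall>x. (f has_derivative (\<lambda>h. grad x \<bullet> h)) (at x)"
    and nrm: "is_norm_on (block_space blk i) nrm"
    and lip: "\<forall>x. \<forall>t\<in>block_space blk i.
        dual_norm (block_space blk i) nrm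
          (block_proj blk i (grad (x + t)) - block_proj blk i (grad x)) \<le> Li * nrm t"
    and t: "t \<in> block_space blk i"
  shows "f (x + t) \<le> f x + grad x \<bullet> t + Li / 2 * (nrm t)\<^sup>2"
proof -
  define \<phi> where "\<phi> \<tau> = f (x + \<tau> *\<^sub>R t) - \<tau> * (grad x \<bullet> t) - Li / 2 * \<tau>\<^sup>2 * (nrm t)\<^sup>2" for \<tau>
  have "\<phi> 1 \<le> \<phi> 0"
  proof (rule DERIV_nonpos_imp_nonincreasing[of 0 1 \<phi>])
    fix \<tau> :: real assume \<tau>: "0 \<le> \<tau>" "\<tau> \<le> 1"
    have D: "DERIV \<phi> \<tau> :> grad (x + \<tau> *\<^sub>R t) \<bullet> t - grad x \<bullet> t - Li * \<tau> * (nrm t)\<^sup>2"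
      unfolding \<phi>_def
      by (rule derivative_eq_intros has_real_derivative_along_line[OF grad] | simp)+
    have \<tau>t: "\<tau> *\<^sub>R t \<in> block_space blk i" using t subspace_block_space by (auto intro: subspace_scale)
    have "grad (x + \<tau> *\<^sub>R t) \<bullet> t - grad x \<bullet> t
        = (block_proj blk i (grad (x + \<tau> *\<^sub>R t)) - block_proj blk i (grad x)) \<bullet> t"
      using inner_block_proj_left[OF t] by (simp add: inner_diff_left)
    also have "\<dots> \<le> dual_norm (block_space blk i) nrm
          (block_proj blk i (grad (x + \<tau> *\<^sub>R t)) - block_proj blk i (grad x)) * nrm t"
      by (rule inner_le_dual_norm_mult[OF nrm t])
    also have "\<dots> \<le> (Li * nrm (\<tau> *\<^sub>R t)) * nrm t"
      using lip \<tau>t is_norm_on_nonneg[OF nrm t] by (intro mult_right_mono) auto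
    also have "\<dots> = Li * \<tau> * (nrm t)\<^sup>2"
      using is_norm_on_scaleR[OF nrm t] \<tau> by (simp add: power2_eq_square)
    finally show "\<exists>y. DERIV \<phi> \<tau> :> y \<and> y \<le> 0" using D by auto
  qed simp
  then show ?thesis unfolding \<phi>_def by simp
qed

text \<open>The optimal value of the subproblem defining \<open>s\<^sup>#\<close> is \<open>-\<parallel>s\<parallel>\<^sup>*\<^sup>2/2\<close>; only the upper
  bound is needed. It follows by testing the subproblem with \<open>(s \<bullet> t) t\<close> for unit vectors \<open>t\<close>.\<close>

lemma sharp_value_le_dual_norm:
  assumes nrm: "is_norm_on (block_space blk i) nrm" and ne: "blk j = i"
    and u: "u \<in> block_space blk i"
    and opt: "\<forall>t\<in>block_space blk i. - (s \<bullet> u) + (nrm u)\<^sup>2 / 2 \<le> - (s \<bullet> t) + (nrm t)\<^sup>2 / 2"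
  shows "- (s \<bullet> u) + (nrm u)\<^sup>2 / 2 \<le> - (dual_norm (block_space blk i) nrm s)\<^sup>2 / 2"
proof -
  let ?v = "- (s \<bullet> u) + (nrm u)\<^sup>2 / 2"
  let ?d = "dual_norm (block_space blk i) nrm s"
  have unit: "(s \<bullet> t)\<^sup>2 \<le> - 2 * ?v" if t: "t \<in> block_space blk i" "nrm t = 1" for t
  proof -
    have "(s \<bullet> t) *\<^sub>R t \<in> block_space blk i"
      using t subspace_block_space by (auto intro: subspace_scale)
    then have "?v \<le> - (s \<bullet> ((s \<bullet> t) *\<^sub>R t)) + (nrm ((s \<bullet> t) *\<^sub>R t))\<^sup>2 / 2"
      using opt by blast
    also have "\<dots> = - (s \<bullet> t)\<^sup>2 / 2"
      using is_norm_on_scaleR[OF nrm t(1)] t(2) by (simp add: power2_eq_square)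
    finally show ?thesis by simp
  qed
  have "?d \<le> sqrt (- 2 * ?v)"
    unfolding dual_norm_def
  proof (rule cSup_least)
    show "{s \<bullet> t |t. t \<in> block_space blk i \<and> nrm t = 1} \<noteq> {}"
      using block_space_unit_exists[OF nrm ne] by blast
  next
    fix y assume "y \<in> {s \<bullet> t |t. t \<in> block_space blk i \<and> nrm t = 1}"
    then show "y \<le> sqrt (- 2 * ?v)" using unit by (auto intro: real_le_rsqrt)
  qed
  moreover have "0 \<le> ?d" by (rule dual_norm_nonneg[OF nrm ne])
  moreover have "?v \<le> 0"
    using opt subspace_0[OF subspace_block_space] is_norm_on_zero[OF nrm subspace_block_space]
    by force
  ultimately have "?d\<^sup>2 \<le> (sqrt (- 2 * ?v))\<^sup>2" by (intro power_mono)
  also have "\<dots> = - 2 * ?v" using \<open>?v \<le> 0\<close> by simp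
  finally show ?thesis by simp
qed

lemma wnorm_nonneg: "\<forall>i<n. 0 \<le> w i \<Longrightarrow> 0 \<le> wnorm n blk nrm w x"
  unfolding wnorm_def by (intro real_sqrt_ge_zero sum_nonneg) auto

lemma wnorm_squared:
  assumes "\<forall>i<n. 0 \<le> w i"
  shows "(wnorm n blk nrm w x)\<^sup>2 = (\<Sum>i<n. w i * (nrm i (block_proj blk i x))\<^sup>2)"
  unfolding wnorm_def using assms by (intro real_sqrt_pow2 sum_nonneg) auto

section \<open>Two recursive inequalities\<close>

text \<open>The quadratic decrease gives \<open>1 / \<theta> (k + 1) \<ge> 1 / \<theta> k + 1 / c\<close> as long as
  \<open>\<theta> (k + 1) > 0\<close>.\<close>

lemma inverse_bound_of_quadratic_decrease:
  fixes \<theta> :: "nat \<Rightarrow> real"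
  assumes c: "c > 0" and nonneg: "\<forall>k. 0 \<le> \<theta> k" and init: "\<theta> 0 \<le> \<xi>0" "0 < \<xi>0"
    and decrease: "\<forall>k. \<theta> (Suc k) \<le> \<theta> k - (\<theta> k)\<^sup>2 / c"
  shows "\<theta> k > 0 \<Longrightarrow> real k / c + 1 / \<xi>0 \<le> 1 / \<theta> k"
proof (induction k)
  case 0
  then show ?case using init by (simp add: frac_le)
next
  case (Suc k)
  let ?u = "\<theta> k" and ?w = "\<theta> k - (\<theta> k)\<^sup>2 / c"
  have w_pos: "?w > 0" using decrease Suc.prems by (meson less_le_trans)
  then have "?u \<noteq> 0" by auto
  then have u_pos: "?u > 0" using nonneg[rule_format, of k] by linarith
  have "(1 / ?u + 1 / c) * ?w = 1 - ?u\<^sup>2 / c\<^sup>2"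
    using u_pos c by (simp add: field_simps power2_eq_square)
  then have "1 / ?u + 1 / c \<le> 1 / ?w" using w_pos by (simp add: pos_le_divide_eq)
  also have "\<dots> \<le> 1 / \<theta> (Suc k)" using decrease Suc.prems w_pos by (intro divide_left_mono) auto
  finally show ?case using Suc.IH u_pos by (simp add: add_divide_distrib)
qed

lemma geometric_decrease:
  fixes \<theta> :: "nat \<Rightarrow> real"
  assumes "\<forall>k. \<theta> (Suc k) \<le> q * \<theta> k" "0 \<le> q"
  shows "\<theta> (k + m) \<le> q ^ m * \<theta> k"
proof (induction m)
  case (Suc m)
  have "\<theta> (k + Suc m) \<le> q * \<theta> (k + m)" using assms(1) by simp
  also have "\<dots> \<le> q * (q ^ m * \<theta> k)" using Suc.IH assms(2) by (intro mult_left_mono)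
  finally show ?case by simp
qed simp

lemma one_minus_power_le:
  assumes q: "0 \<le> q" "q \<le> 1" and \<rho>: "0 < \<rho>" and m: "ln (1 / \<rho>) \<le> real m * q"
  shows "(1 - q) ^ m \<le> \<rho>"
proof -
  have "(1 - q) ^ m \<le> exp (- q) ^ m"
    using q by (intro power_mono) (auto simp: exp_ge_add_one_self[of "- q", simplified])
  also have "\<dots> = exp (- (real m * q))" by (simp flip: exp_of_nat_mult)
  also have "\<dots> \<le> exp (- ln (1 / \<rho>))" using m by simp
  also have "\<dots> = \<rho>" using \<rho> by (simp add: ln_div)
  finally show ?thesis .
qed

text \<open>First the quadratic decrease brings \<open>\<theta>\<close> below \<open>\<epsilon>\<close> within \<open>c/\<epsilon> - c/\<xi>\<^sub>0\<close> steps,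
  then the contraction by \<open>1 - \<epsilon>/c\<close> gains the factor \<open>\<rho>\<close> within \<open>(c/\<epsilon>) ln(1/\<rho>)\<close> steps.\<close>

lemma two_phase_recursion_bound:
  fixes \<theta> :: "nat \<Rightarrow> real"
  assumes c: "c > 0" and \<epsilon>: "0 < \<epsilon>" "\<epsilon> < \<xi>0" "\<epsilon> < c"
    and nonneg: "\<forall>k. 0 \<le> \<theta> k" and init: "\<theta> 0 \<le> \<xi>0"
    and quadratic: "\<forall>k. \<theta> (Suc k) \<le> \<theta> k - (\<theta> k)\<^sup>2 / c"
    and linear: "\<forall>k. \<theta> (Suc k) \<le> (1 - \<epsilon> / c) * \<theta> k"
    and \<rho>: "0 < \<rho>" "\<rho> < 1"
    and K: "real K \<ge> c / \<epsilon> * (1 + ln (1 / \<rho>)) + 2 - c / \<xi>0"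
  shows "\<theta> K \<le> \<epsilon> * \<rho>"
proof -
  define a where "a = c / \<epsilon> - c / \<xi>0"
  have "a > 0" unfolding a_def using c \<epsilon> by (simp add: frac_less2)
  define k1 where "k1 = nat \<lceil>a\<rceil>"
  have k1: "a \<le> real k1" "real k1 < a + 1" unfolding k1_def using \<open>a > 0\<close> by linarith+
  have \<theta>_k1: "\<theta> k1 \<le> \<epsilon>"
  proof (cases "\<theta> k1 > 0")
    case True
    have "1 / \<epsilon> = a / c + 1 / \<xi>0" unfolding a_def using c \<epsilon> by (simp add: field_simps)
    also have "\<dots> \<le> real k1 / c + 1 / \<xi>0" using k1 c by (simp add: divide_right_mono)
    also have "\<dots> \<le> 1 / \<theta> k1"
      using inverse_bound_of_quadratic_decrease[OF c nonneg init _ quadratic True] \<epsilon> by simp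
    finally show ?thesis using True \<epsilon> by (simp add: field_simps)
  qed (use \<epsilon> in simp)
  define m where "m = K - k1"
  have "0 \<le> c / \<epsilon> * ln (1 / \<rho>)" using c \<epsilon> \<rho> by simp
  moreover have "real K \<ge> a + 2 + c / \<epsilon> * ln (1 / \<rho>)"
    using K unfolding a_def by (simp add: algebra_simps)
  ultimately have "k1 \<le> K" and m: "c / \<epsilon> * ln (1 / \<rho>) \<le> real m"
    using k1 unfolding m_def by (auto simp: of_nat_diff)
  from m have m': "ln (1 / \<rho>) \<le> real m * (\<epsilon> / c)" using c \<epsilon> by (simp add: field_simps)
  have "\<theta> K \<le> (1 - \<epsilon> / c) ^ m * \<theta> k1"
    using geometric_decrease[OF linear, of k1 m] \<open>k1 \<le> K\<close> c \<epsilon> unfolding m_def by simp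
  also have "\<dots> \<le> \<rho> * \<epsilon>"
    using one_minus_power_le[of "\<epsilon> / c" \<rho> m] m' \<theta>_k1 nonneg c \<epsilon> \<rho>
    by (intro mult_mono) auto
  finally show ?thesis by (simp add: mult.commute)
qed

lemma integral_bind_pmf_nonneg:
  fixes g :: "'b \<Rightarrow> real"
  assumes M: "finite (set_pmf M)" and N: "\<And>x. finite (set_pmf (N x))" and g: "\<And>y. 0 \<le> g y"
  shows "(\<integral>y. g y \<partial>measure_pmf (bind_pmf M N)) = (\<integral>x. (\<integral>y. g y \<partial>measure_pmf (N x)) \<partial>measure_pmf M)"
proof -
  have "finite (set_pmf (bind_pmf M N))" using M N by simp
  then have "ennreal (\<integral>y. g y \<partial>measure_pmf (bind_pmf M N)) = (\<integral>\<^sup>+y. g y \<partial>measure_pmf (bind_pmf M N))"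
    by (intro nn_integral_eq_integral[symmetric] integrable_measure_pmf_finite) (auto intro: g)
  also have "\<dots> = (\<integral>\<^sup>+x. (\<integral>\<^sup>+y. g y \<partial>measure_pmf (N x)) \<partial>measure_pmf M)"
    by simp
  also have "\<dots> = (\<integral>\<^sup>+x. ennreal (\<integral>y. g y \<partial>measure_pmf (N x)) \<partial>measure_pmf M)"
    by (intro nn_integral_cong nn_integral_eq_integral integrable_measure_pmf_finite N)
       (auto intro: g)
  also have "\<dots> = ennreal (\<integral>x. (\<integral>y. g y \<partial>measure_pmf (N x)) \<partial>measure_pmf M)"
    by (intro nn_integral_eq_integral integrable_measure_pmf_finite M AE_pmfI integral_nonneg_AE)
       (auto intro: g)
  finally show ?thesis
    by (subst (asm) ennreal_inj) (auto intro!: integral_nonneg_AE g)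
qed

section \<open>Expected decrease of RCDS\<close>

locale rcds_problem =
  fixes n :: nat
    and blk :: "'N::finite \<Rightarrow> nat"
    and nrm :: "nat \<Rightarrow> real^'N \<Rightarrow> real"
    and f :: "real^'N \<Rightarrow> real"
    and grad :: "real^'N \<Rightarrow> real^'N"
    and L :: "nat \<Rightarrow> real"
    and I :: "nat pmf"
    and sharp :: "nat \<Rightarrow> real^'N \<Rightarrow> real^'N"
    and x0 :: "real^'N"
    and fstar :: real
  assumes blk_range: "\<forall>j. blk j < n"
    and blk_nonempty: "\<forall>i<n. \<exists>j. blk j = i"
    and norms: "\<forall>i<n. is_norm_on (block_space blk i) (nrm i)"
    and convex: "convex_on UNIV f"
    and grad: "\<forall>x. (f has_derivative (\<lambda>h. grad x \<bullet> h)) (at x)"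
    and L_pos: "\<forall>i<n. L i > 0"
    and lipschitz: "\<forall>i<n. \<forall>x. \<forall>t\<in>block_space blk i.
        dual_norm (block_space blk i) (nrm i)
          (block_proj blk i (grad (x + t)) - block_proj blk i (grad x))
        \<le> L i * nrm i t"
    and attains: "\<exists>xs. \<forall>y. f xs \<le> f y"
    and fstar: "fstar = (INF y. f y)"
    and support: "set_pmf I = {0..<n}"
    and sharp: "\<forall>i<n. \<forall>s\<in>block_space blk i.
        sharp i s \<in> block_space blk i \<and>
        (\<forall>t\<in>block_space blk i.
           - (s \<bullet> sharp i s) + (nrm i (sharp i s))\<^sup>2 / 2 \<le> - (s \<bullet> t) + (nrm i t)\<^sup>2 / 2)"
    and R_finite: "bdd_above {wnorm n blk nrm (\<lambda>i. L i / pmf I i) (y - xs) | y xs.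
                      f y \<le> f x0 \<and> (\<forall>z. f xs \<le> f z)}"
begin

abbreviation "R \<equiv> level_radius n blk nrm (\<lambda>i. L i / pmf I i) f x0"
abbreviation "grad_dual i x \<equiv> dual_norm (block_space blk i) (nrm i) (block_proj blk i (grad x))"
abbreviation "step i x \<equiv> rcds_step blk L sharp grad i x"

lemma pmf_pos: "i < n \<Longrightarrow> 0 < pmf I i"
  using support by (simp add: pmf_positive)

lemma sum_pmf_blocks: "(\<Sum>i<n. pmf I i) = 1"
  using support sum_pmf_eq_1[of "{..<n}" I] by (simp add: atLeast0LessThan)

lemma integral_blocks: "(\<integral>i. g i \<partial>measure_pmf I) = (\<Sum>i<n. pmf I i * g i)"
  using support by (subst integral_measure_pmf[of "{..<n}"]) auto

lemma weights_nonneg: "\<forall>i<n. 0 \<le> L i / pmf I i"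
  using L_pos by (simp add: less_imp_le)

lemma obtain_minimizer:
  obtains xs where "\<forall>y. f xs \<le> f y" "fstar = f xs"
proof -
  obtain xs where xs: "\<forall>y. f xs \<le> f y" using attains by blast
  then have "fstar = f xs" unfolding fstar
    by (intro antisym cINF_lower cINF_greatest) (auto intro: bdd_belowI)
  then show ?thesis using that xs by blast
qed

lemma fstar_le: "fstar \<le> f y"
  using obtain_minimizer by metis

lemma wnorm_le_level_radius:
  assumes "f y \<le> f x0" "\<forall>z. f xs \<le> f z"
  shows "wnorm n blk nrm (\<lambda>i. L i / pmf I i) (y - xs) \<le> R"
  unfolding level_radius_def using assms by (intro cSup_upper R_finite) auto

lemma level_radius_nonneg: "0 \<le> R"
proof -
  obtain xs where "\<forall>y. f xs \<le> f y" using attains by blast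
  then have "wnorm n blk nrm (\<lambda>i. L i / pmf I i) (x0 - xs) \<le> R"
    by (rule wnorm_le_level_radius[OF order.refl])
  then show ?thesis using wnorm_nonneg[OF weights_nonneg] by (rule order_trans[rotated])
qed

lemma block_descent:
  assumes "i < n" "t \<in> block_space blk i"
  shows "f (x + t) \<le> f x + grad x \<bullet> t + L i / 2 * (nrm i t)\<^sup>2"
  using assms norms lipschitz by (intro block_descent_lemma[OF grad]) auto

lemma f_step_le:
  assumes i: "i < n"
  shows "f (step i x) \<le> f x - (grad_dual i x)\<^sup>2 / (2 * L i)"
proof -
  let ?B = "block_space blk i"
  let ?s = "block_proj blk i (grad x)"
  let ?u = "sharp i ?s"
  have nrm: "is_norm_on ?B (nrm i)" and ne: "\<exists>j. blk j = i" using norms blk_nonempty i by auto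
  have u: "?u \<in> ?B" and opt: "\<forall>t\<in>?B. - (?s \<bullet> ?u) + (nrm i ?u)\<^sup>2 / 2 \<le> - (?s \<bullet> t) + (nrm i t)\<^sup>2 / 2"
    using sharp[rule_format, OF i block_proj_in_block_space] by auto
  have L: "L i > 0" using L_pos i by auto
  let ?t = "(- (1 / L i)) *\<^sub>R ?u"
  have "f (step i x) = f (x + ?t)" by (simp add: rcds_step_def)
  also have "\<dots> \<le> f x + grad x \<bullet> ?t + L i / 2 * (nrm i ?t)\<^sup>2"
    by (rule block_descent[OF i subspace_scale[OF subspace_block_space u]])
  also have "grad x \<bullet> ?t = - (1 / L i) * (?s \<bullet> ?u)"
    using inner_block_proj_left[OF u, of "grad x"] by simp
  also have "nrm i ?t = (1 / L i) * nrm i ?u"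
    using is_norm_on_scaleR[OF nrm u, of "- (1 / L i)"] L by simp
  also have "f x + - (1 / L i) * (?s \<bullet> ?u) + L i / 2 * ((1 / L i) * nrm i ?u)\<^sup>2
      = f x + (1 / L i) * (- (?s \<bullet> ?u) + (nrm i ?u)\<^sup>2 / 2)"
    using L by (simp add: field_simps power2_eq_square)
  also have "\<dots> \<le> f x + (1 / L i) * (- (grad_dual i x)\<^sup>2 / 2)"
    using sharp_value_le_dual_norm[OF nrm _ u opt] ne L by (intro add_left_mono mult_left_mono) auto
  finally show ?thesis by simp
qed

lemma f_step_le_self:
  assumes "i < n"
  shows "f (step i x) \<le> f x"
proof -
  have "0 \<le> (grad_dual i x)\<^sup>2 / (2 * L i)" using L_pos[rule_format, OF assms] by simp
  then show ?thesis using f_step_le[OF assms, of x] by linarith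
qed

lemma weighted_grad_dual_nonneg: "0 \<le> (\<Sum>i<n. pmf I i / L i * (grad_dual i x)\<^sup>2)"
  using L_pos by (auto intro!: sum_nonneg divide_nonneg_pos)

text \<open>Convexity, then Cauchy--Schwarz for the dual pair of weighted norms with weights
  \<open>L\<^sub>i/p\<^sub>i\<close> and \<open>p\<^sub>i/L\<^sub>i\<close>.\<close>

lemma gap_le_level_radius:
  assumes fx: "f x \<le> f x0"
  shows "f x - fstar \<le> R * sqrt (\<Sum>i<n. pmf I i / L i * (grad_dual i x)\<^sup>2)"
proof -
  obtain xs where xs: "\<forall>y. f xs \<le> f y" "fstar = f xs" using obtain_minimizer by blast
  let ?h = "x - xs"
  define a where "a i = sqrt (pmf I i / L i) * grad_dual i x" for i
  define b where "b i = sqrt (L i / pmf I i) * nrm i (block_proj blk i ?h)" for i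
  have "f x - fstar \<le> grad x \<bullet> ?h"
    using convex_on_gradient_inequality[OF convex grad, of x xs] xs by (simp add: inner_diff_right)
  also have "\<dots> = (\<Sum>i<n. block_proj blk i (grad x) \<bullet> block_proj blk i ?h)"
    by (rule inner_eq_sum_block_proj[OF blk_range])
  also have "\<dots> \<le> (\<Sum>i<n. grad_dual i x * nrm i (block_proj blk i ?h))"
    using norms by (intro sum_mono inner_le_dual_norm_mult block_proj_in_block_space) auto
  also have "\<dots> = (\<Sum>i<n. \<bar>a i\<bar> * \<bar>b i\<bar>)"
  proof (rule sum.cong[OF refl])
    fix i assume "i \<in> {..<n}"
    then have i: "i < n" by simp
    have "0 \<le> grad_dual i x" using norms blk_nonempty i by (metis dual_norm_nonneg)
    moreover have "0 \<le> nrm i (block_proj blk i ?h)"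
      using norms i by (intro is_norm_on_nonneg[OF _ block_proj_in_block_space]) auto
    moreover have "sqrt (pmf I i / L i) * sqrt (L i / pmf I i) = 1"
      using pmf_pos[OF i] L_pos i by (simp flip: real_sqrt_mult add: less_imp_neq[symmetric])
    ultimately show "grad_dual i x * nrm i (block_proj blk i ?h) = \<bar>a i\<bar> * \<bar>b i\<bar>"
      unfolding a_def b_def using pmf_pos[OF i] L_pos[rule_format, OF i]
      by (simp add: abs_mult mult_ac)
  qed
  also have "\<dots> \<le> L2_set a {..<n} * L2_set b {..<n}" by (rule L2_set_mult_ineq)
  also have "L2_set a {..<n} = sqrt (\<Sum>i<n. pmf I i / L i * (grad_dual i x)\<^sup>2)"
    unfolding L2_set_def a_def using pmf_pos L_pos
    by (intro arg_cong[where f = sqrt] sum.cong refl) (simp add: power_mult_distrib less_imp_le)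
  also have "L2_set b {..<n} = wnorm n blk nrm (\<lambda>i. L i / pmf I i) ?h"
    unfolding L2_set_def b_def wnorm_def using pmf_pos L_pos
    by (intro arg_cong[where f = sqrt] sum.cong refl) (simp add: power_mult_distrib less_imp_le)
  also have "\<dots> \<le> R" by (rule wnorm_le_level_radius[OF fx xs(1)])
  finally show ?thesis using weighted_grad_dual_nonneg by (simp add: mult.commute mult_right_mono)
qed

lemma expected_f_step_le:
  assumes fx: "f x \<le> f x0" and R: "R > 0"
  shows "(\<Sum>i<n. pmf I i * f (step i x)) \<le> f x - (f x - fstar)\<^sup>2 / (2 * R\<^sup>2)"
proof -
  let ?S = "\<Sum>i<n. pmf I i / L i * (grad_dual i x)\<^sup>2"
  have "(\<Sum>i<n. pmf I i * f (step i x)) \<le> (\<Sum>i<n. pmf I i * (f x - (grad_dual i x)\<^sup>2 / (2 * L i)))"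
    using f_step_le by (intro sum_mono mult_left_mono) auto
  also have "\<dots> = (\<Sum>i<n. pmf I i * f x - pmf I i / L i * (grad_dual i x)\<^sup>2 / 2)"
    by (intro sum.cong refl) (simp add: field_simps)
  also have "\<dots> = (\<Sum>i<n. pmf I i) * f x - ?S / 2"
    by (simp add: sum_subtractf sum_distrib_right sum_divide_distrib)
  finally have decrease: "(\<Sum>i<n. pmf I i * f (step i x)) \<le> f x - ?S / 2"
    using sum_pmf_blocks by simp
  have "(f x - fstar)\<^sup>2 \<le> (R * sqrt ?S)\<^sup>2"
    using gap_le_level_radius[OF fx] fstar_le[of x] by (intro power_mono) auto
  also have "\<dots> = R\<^sup>2 * ?S"
    using weighted_grad_dual_nonneg by (simp add: power_mult_distrib)
  finally have "(f x - fstar)\<^sup>2 / (2 * R\<^sup>2) \<le> ?S / 2" using R by (simp add: field_simps)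
  then show ?thesis using decrease by linarith
qed

text \<open>\<open>x0\<close> is the \<open>p\<close>-average of the points \<open>x\<^sup>* + (1 / p\<^sub>i) U\<^sub>i (x0 - x\<^sup>*)\<^sup>(\<^sup>i\<^sup>)\<close>;
  convexity and the block descent lemma at the stationary point \<open>x\<^sup>*\<close> bound the initial gap.\<close>

lemma initial_gap_le: "f x0 - fstar \<le> R\<^sup>2 / 2"
proof -
  obtain xs where xs: "\<forall>y. f xs \<le> f y" "fstar = f xs" using obtain_minimizer by blast
  let ?h = "x0 - xs"
  let ?t = "\<lambda>i. (1 / pmf I i) *\<^sub>R block_proj blk i ?h"
  have "grad xs = 0"
    using differential_zero_maxmin[of xs UNIV f] grad xs by (metis inner_eq_zero_iff open_UNIV UNIV_I)
  have "(\<Sum>i<n. pmf I i *\<^sub>R (xs + ?t i)) = (\<Sum>i<n. pmf I i *\<^sub>R xs + block_proj blk i ?h)"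
    by (intro sum.cong refl) (fastforce dest: pmf_pos simp: scaleR_add_right)
  also have "\<dots> = x0" using sum_pmf_blocks sum_block_proj[OF blk_range]
    by (simp add: sum.distrib flip: scaleR_sum_left)
  finally have "f x0 = f (\<Sum>i<n. pmf I i *\<^sub>R (xs + ?t i))" by simp
  also have "\<dots> \<le> (\<Sum>i<n. pmf I i * f (xs + ?t i))"
    using sum_pmf_blocks blk_range
    by (intro convex_on_sum[OF _ _ convex]) (auto simp: lessThan_empty_iff)
  also have "\<dots> \<le> (\<Sum>i<n. pmf I i * (f xs + L i / 2 * (nrm i (block_proj blk i ?h) / pmf I i)\<^sup>2))"
  proof (intro sum_mono mult_left_mono)
    fix i assume "i \<in> {..<n}"
    then have i: "i < n" by simp
    have nrm: "is_norm_on (block_space blk i) (nrm i)" using norms i by auto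
    have "?t i \<in> block_space blk i"
      by (rule subspace_scale[OF subspace_block_space block_proj_in_block_space])
    then have "f (xs + ?t i) \<le> f xs + L i / 2 * (nrm i (?t i))\<^sup>2"
      using block_descent[OF i, of "?t i" xs] \<open>grad xs = 0\<close> by simp
    also have "nrm i (?t i) = nrm i (block_proj blk i ?h) / pmf I i"
      using is_norm_on_scaleR[OF nrm block_proj_in_block_space] pmf_pos[OF i] by simp
    finally show "f (xs + ?t i) \<le> f xs + L i / 2 * (nrm i (block_proj blk i ?h) / pmf I i)\<^sup>2" .
  qed simp
  also have "\<dots> = (\<Sum>i<n. pmf I i * f xs + L i / pmf I i * (nrm i (block_proj blk i ?h))\<^sup>2 / 2)"
    by (intro sum.cong refl) (auto dest!: pmf_pos simp: field_simps power2_eq_square)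
  also have "\<dots> = (\<Sum>i<n. pmf I i) * f xs + (wnorm n blk nrm (\<lambda>i. L i / pmf I i) ?h)\<^sup>2 / 2"
    by (simp add: wnorm_squared[OF weights_nonneg] sum.distrib sum_distrib_right sum_divide_distrib)
  also have "(wnorm n blk nrm (\<lambda>i. L i / pmf I i) ?h)\<^sup>2 \<le> R\<^sup>2"
    using wnorm_le_level_radius[OF order.refl xs(1)] wnorm_nonneg[OF weights_nonneg]
    by (intro power_mono) auto
  finally show ?thesis using xs sum_pmf_blocks by simp
qed

section \<open>Convergence in probability\<close>

text \<open>Restricting the truncated gap to the initial level set, which contains the support of
  every iterate, makes the one-step bounds hold pointwise.\<close>

definition trunc_gap :: "real \<Rightarrow> real^'N \<Rightarrow> real" where
  "trunc_gap \<epsilon> x = (if f x \<le> f x0 \<and> \<epsilon> \<le> f x - fstar then f x - fstar else 0)"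

abbreviation "iterate k \<equiv> rcds blk L sharp grad I x0 k"

lemma trunc_gap_nonneg: "0 \<le> trunc_gap \<epsilon> x"
  unfolding trunc_gap_def using fstar_le[of x] by auto

lemma set_pmf_iterate_level: "x \<in> set_pmf (iterate k) \<Longrightarrow> f x \<le> f x0"
proof (induction k arbitrary: x)
  case (Suc k)
  then obtain y i where "y \<in> set_pmf (iterate k)" "i \<in> set_pmf I" "x = step i y" by auto
  moreover from this(2) have "i < n" using support by simp
  ultimately show ?case using Suc.IH f_step_le_self by (meson order_trans)
qed simp

lemma finite_set_pmf_iterate: "finite (set_pmf (iterate k))"
  using support by (induction k) auto

lemma expected_trunc_gap_step_le:
  assumes fx: "f x \<le> f x0" and R: "R > 0"
  shows "(\<integral>i. trunc_gap \<epsilon> (step i x) \<partial>measure_pmf I)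
           \<le> trunc_gap \<epsilon> x - (trunc_gap \<epsilon> x)\<^sup>2 / (2 * R\<^sup>2)"
    and "trunc_gap \<epsilon> x - (trunc_gap \<epsilon> x)\<^sup>2 / (2 * R\<^sup>2) \<le> (1 - \<epsilon> / (2 * R\<^sup>2)) * trunc_gap \<epsilon> x"
proof -
  let ?g = "trunc_gap \<epsilon> x"
  have "(\<Sum>i<n. pmf I i * trunc_gap \<epsilon> (step i x)) \<le> ?g - ?g\<^sup>2 / (2 * R\<^sup>2) \<and>
        ?g - ?g\<^sup>2 / (2 * R\<^sup>2) \<le> (1 - \<epsilon> / (2 * R\<^sup>2)) * ?g"
  proof (cases "\<epsilon> \<le> f x - fstar")
    case True
    then have g: "?g = f x - fstar" using fx by (simp add: trunc_gap_def)
    have "(\<Sum>i<n. pmf I i * trunc_gap \<epsilon> (step i x)) \<le> (\<Sum>i<n. pmf I i * (f (step i x) - fstar))"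
      using f_step_le_self fstar_le unfolding trunc_gap_def
      by (intro sum_mono mult_left_mono) auto
    also have "\<dots> = (\<Sum>i<n. pmf I i * f (step i x)) - (\<Sum>i<n. pmf I i) * fstar"
      by (simp add: right_diff_distrib sum_subtractf sum_distrib_right)
    also have "\<dots> \<le> ?g - ?g\<^sup>2 / (2 * R\<^sup>2)"
      using expected_f_step_le[OF fx R] sum_pmf_blocks g by simp
    finally have "(\<Sum>i<n. pmf I i * trunc_gap \<epsilon> (step i x)) \<le> ?g - ?g\<^sup>2 / (2 * R\<^sup>2)" .
    moreover have "\<epsilon> * ?g \<le> ?g * ?g" using True g fstar_le[of x] by (intro mult_right_mono) auto
    then have "\<epsilon> * ?g / (2 * R\<^sup>2) \<le> ?g\<^sup>2 / (2 * R\<^sup>2)"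
      by (simp add: power2_eq_square divide_right_mono)
    ultimately show ?thesis by (simp add: left_diff_distrib)
  next
    case False
    have "trunc_gap \<epsilon> (step i x) = 0" if "i < n" for i
      using f_step_le_self[OF that, of x] False by (simp add: trunc_gap_def)
    moreover have "?g = 0" using False by (simp add: trunc_gap_def)
    ultimately show ?thesis by simp
  qed
  then show "(\<integral>i. trunc_gap \<epsilon> (step i x) \<partial>measure_pmf I) \<le> ?g - ?g\<^sup>2 / (2 * R\<^sup>2)"
    and "?g - ?g\<^sup>2 / (2 * R\<^sup>2) \<le> (1 - \<epsilon> / (2 * R\<^sup>2)) * ?g"
    by (simp_all add: integral_blocks)
qed

definition mean_trunc_gap :: "real \<Rightarrow> nat \<Rightarrow> real" where
  "mean_trunc_gap \<epsilon> k = (\<integral>x. trunc_gap \<epsilon> x \<partial>measure_pmf (iterate k))"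

lemma mean_trunc_gap_Suc:
  "mean_trunc_gap \<epsilon> (Suc k)
     = (\<integral>x. (\<integral>i. trunc_gap \<epsilon> (step i x) \<partial>measure_pmf I) \<partial>measure_pmf (iterate k))"
proof -
  have "mean_trunc_gap \<epsilon> (Suc k)
      = (\<integral>x. (\<integral>y. trunc_gap \<epsilon> y \<partial>measure_pmf (map_pmf (\<lambda>i. step i x) I)) \<partial>measure_pmf (iterate k))"
    unfolding mean_trunc_gap_def rcds.simps
    by (rule integral_bind_pmf_nonneg[OF finite_set_pmf_iterate _ trunc_gap_nonneg])
       (simp add: support)
  then show ?thesis by simp
qed

lemma mean_trunc_gap_nonneg: "0 \<le> mean_trunc_gap \<epsilon> k"
  unfolding mean_trunc_gap_def by (intro integral_nonneg_AE) (simp add: trunc_gap_nonneg)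

lemma mean_trunc_gap_0_le: "mean_trunc_gap \<epsilon> 0 \<le> f x0 - fstar"
  by (simp add: mean_trunc_gap_def trunc_gap_def fstar_le)

lemma mean_trunc_gap_Suc_le:
  assumes R: "R > 0"
  shows "mean_trunc_gap \<epsilon> (Suc k) \<le> mean_trunc_gap \<epsilon> k - (mean_trunc_gap \<epsilon> k)\<^sup>2 / (2 * R\<^sup>2)"
    and "mean_trunc_gap \<epsilon> (Suc k) \<le> (1 - \<epsilon> / (2 * R\<^sup>2)) * mean_trunc_gap \<epsilon> k"
proof -
  let ?c = "2 * R\<^sup>2" and ?M = "measure_pmf (iterate k)" and ?\<theta> = "mean_trunc_gap \<epsilon> k"
  have int: "integrable ?M h" for h :: "real^'N \<Rightarrow> real"
    by (rule integrable_measure_pmf_finite[OF finite_set_pmf_iterate])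
  have step: "mean_trunc_gap \<epsilon> (Suc k) \<le> (\<integral>x. h x \<partial>?M)"
    if "\<And>x. f x \<le> f x0 \<Longrightarrow> (\<integral>i. trunc_gap \<epsilon> (step i x) \<partial>measure_pmf I) \<le> h x" for h
    unfolding mean_trunc_gap_Suc
    by (intro integral_mono_AE int AE_pmfI) (use that set_pmf_iterate_level in blast)
  have "mean_trunc_gap \<epsilon> (Suc k) \<le> (\<integral>x. trunc_gap \<epsilon> x - (trunc_gap \<epsilon> x)\<^sup>2 / ?c \<partial>?M)"
    using expected_trunc_gap_step_le(1)[OF _ R] by (rule step)
  also have "\<dots> = ?\<theta> - (\<integral>x. (trunc_gap \<epsilon> x)\<^sup>2 \<partial>?M) / ?c"
    unfolding mean_trunc_gap_def by (simp add: Bochner_Integration.integral_diff[OF int int])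
  also have "\<dots> \<le> ?\<theta> - ?\<theta>\<^sup>2 / ?c"
  proof -
    have "0 \<le> (\<integral>x. (trunc_gap \<epsilon> x - ?\<theta>)\<^sup>2 \<partial>?M)"
      by (rule integral_nonneg_AE) simp
    also have "\<dots> = (\<integral>x. (trunc_gap \<epsilon> x)\<^sup>2 \<partial>?M) - ?\<theta>\<^sup>2"
      unfolding mean_trunc_gap_def by (rule measure_pmf.variance_eq[OF int int])
    finally show ?thesis using R by (simp add: divide_right_mono)
  qed
  finally show "mean_trunc_gap \<epsilon> (Suc k) \<le> ?\<theta> - ?\<theta>\<^sup>2 / ?c" .
  have "mean_trunc_gap \<epsilon> (Suc k) \<le> (\<integral>x. (1 - \<epsilon> / ?c) * trunc_gap \<epsilon> x \<partial>?M)"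
    using expected_trunc_gap_step_le[OF _ R] by (intro step) (rule order_trans)
  then show "mean_trunc_gap \<epsilon> (Suc k) \<le> (1 - \<epsilon> / ?c) * ?\<theta>"
    by (simp add: mean_trunc_gap_def)
qed

lemma prob_gap_le_of_mean_trunc_gap:
  assumes \<epsilon>: "0 < \<epsilon>" and mean: "mean_trunc_gap \<epsilon> k \<le> \<epsilon> * \<rho>"
  shows "1 - \<rho> \<le> measure_pmf.prob (iterate k) {x. f x - fstar \<le> \<epsilon>}"
proof -
  let ?M = "measure_pmf (iterate k)"
  have "measure ?M {x \<in> space ?M. \<epsilon> \<le> trunc_gap \<epsilon> x} \<le> mean_trunc_gap \<epsilon> k / \<epsilon>"
    unfolding mean_trunc_gap_def
    by (intro integral_Markov_inequality_measure[of _ _ UNIV] integrable_measure_pmf_finite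
        finite_set_pmf_iterate) (auto simp: trunc_gap_nonneg \<epsilon>)
  also have "\<dots> \<le> \<rho>" using mean \<epsilon> by (simp add: field_simps)
  finally have markov: "measure ?M {x. \<epsilon> \<le> trunc_gap \<epsilon> x} \<le> \<rho>" by simp
  have "measure ?M (UNIV - {x. f x - fstar \<le> \<epsilon>}) \<le> measure ?M {x. \<epsilon> \<le> trunc_gap \<epsilon> x}"
    using set_pmf_iterate_level
    by (intro measure_pmf.finite_measure_mono_AE AE_pmfI) (auto simp: trunc_gap_def)
  then show ?thesis
    using markov measure_pmf.prob_compl[of "{x. f x - fstar \<le> \<epsilon>}" "iterate k"] by simp
qed

lemma rcds_gap_le_with_high_probability:
  assumes \<epsilon>: "0 < \<epsilon>" "\<epsilon> < f x0 - fstar" "\<epsilon> < 2 * R\<^sup>2" and \<rho>: "0 < \<rho>" "\<rho> < 1"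
    and k: "2 * R\<^sup>2 / \<epsilon> * (1 + ln (1 / \<rho>)) + 2 - 2 * R\<^sup>2 / (f x0 - fstar) \<le> real k"
  shows "1 - \<rho> \<le> measure_pmf.prob (iterate k) {x. f x - fstar \<le> \<epsilon>}"
proof -
  have "R \<noteq> 0" using \<epsilon> by auto
  then have R: "R > 0" using level_radius_nonneg by simp
  have "mean_trunc_gap \<epsilon> k \<le> \<epsilon> * \<rho>"
    using two_phase_recursion_bound[where \<theta> = "mean_trunc_gap \<epsilon>", OF _ \<epsilon> _ mean_trunc_gap_0_le _ _ \<rho> k]
      R mean_trunc_gap_nonneg mean_trunc_gap_Suc_le[OF R] by auto
  then show ?thesis by (rule prob_gap_le_of_mean_trunc_gap[OF \<epsilon>(1)])
qed

end

theorem theorem11: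
  fixes n :: nat
    and blk :: "'N::finite \<Rightarrow> nat"
    and nrm :: "nat \<Rightarrow> real^'N \<Rightarrow> real"
    and f :: "real^'N \<Rightarrow> real"
    and grad :: "real^'N \<Rightarrow> real^'N"
    and L :: "nat \<Rightarrow> real"
    and I :: "nat pmf"
    and sharp :: "nat \<Rightarrow> real^'N \<Rightarrow> real^'N"
    and x0 :: "real^'N"
    and fstar \<epsilon> \<rho> :: real
    and k :: nat
  assumes blk_range: "\<forall>j. blk j < n"
    and blk_nonempty: "\<forall>i<n. \<exists>j. blk j = i"
    and norms: "\<forall>i<n. is_norm_on (block_space blk i) (nrm i)"
    and convex: "convex_on UNIV f"
    and grad: "\<forall>x. (f has_derivative (\<lambda>h. grad x \<bullet> h)) (at x)"
    and L_pos: "\<forall>i<n. L i > 0"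
    and lipschitz: "\<forall>i<n. \<forall>x. \<forall>t\<in>block_space blk i.
        dual_norm (block_space blk i) (nrm i)
          (block_proj blk i (grad (x + t)) - block_proj blk i (grad x))
        \<le> L i * nrm i t"
    and attains: "\<exists>xs. \<forall>y. f xs \<le> f y"
    and fstar: "fstar = (INF y. f y)"
    and support: "set_pmf I = {0..<n}"
    and sharp: "\<forall>i<n. \<forall>s\<in>block_space blk i.
        sharp i s \<in> block_space blk i \<and>
        (\<forall>t\<in>block_space blk i.
           - (s \<bullet> sharp i s) + (nrm i (sharp i s))\<^sup>2 / 2 \<le> - (s \<bullet> t) + (nrm i t)\<^sup>2 / 2)"
    and R_finite: "bdd_above {wnorm n blk nrm (\<lambda>i. L i / pmf I i) (y - xs) | y xs.
                      f y \<le> f x0 \<and> (\<forall>z. f xs \<le> f z)}"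
    and eps_pos: "0 < \<epsilon>"
    and eps_gap: "\<epsilon> < f x0 - fstar"
    and eps_R: "\<epsilon> < 2 * (level_radius n blk nrm (\<lambda>i. L i / pmf I i) f x0)\<^sup>2"
    and rho: "0 < \<rho>" "\<rho> < 1"
    and k_bound:
      "real k \<ge> 2 * (level_radius n blk nrm (\<lambda>i. L i / pmf I i) f x0)\<^sup>2 / \<epsilon> * (1 + ln (1 / \<rho>))
                 + 2 - 2 * (level_radius n blk nrm (\<lambda>i. L i / pmf I i) f x0)\<^sup>2 / (f x0 - fstar)
       \<or> real k \<ge> 2 * (level_radius n blk nrm (\<lambda>i. L i / pmf I i) f x0)\<^sup>2 / \<epsilon> * (1 + ln (1 / \<rho>)) - 2"
  shows "measure_pmf.prob (rcds blk L sharp grad I x0 k) {x. f x - fstar \<le> \<epsilon>} \<ge> 1 - \<rho>"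
proof -
  interpret rcds_problem n blk nrm f grad L I sharp x0 fstar
    using blk_range blk_nonempty norms convex grad L_pos lipschitz attains fstar support sharp R_finite
    by unfold_locales auto
  have "2 * R\<^sup>2 / (f x0 - fstar) \<ge> 4"
    using initial_gap_le eps_pos eps_gap by (simp add: field_simps)
  then have "2 * R\<^sup>2 / \<epsilon> * (1 + ln (1 / \<rho>)) + 2 - 2 * R\<^sup>2 / (f x0 - fstar) \<le> real k"
    using k_bound by linarith
  then show ?thesis by (rule rcds_gap_le_with_high_probability[OF eps_pos eps_gap eps_R rho])
qed
end
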